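(* Let $n\ge 2$ be an integer, $s=n^2$, $r=n(n-1)$, $m_1=\frac{(n-1)(n-2)}{2}$ and $m_2=\frac{n(n+1)}{2}$. Let $A\in\mathbb{R}^{s\times s}$ be the strictly lower triangular matrix of the optimal third-order method SSPERK$(n^2,3)$: for rows $1\le i\le m_2$, $a_{ij}=\frac1r$ for $j<i$; for rows $m_2<i\le n^2$, $a_{ij}=\frac1r$ for $j\le m_1$, $a_{ij}=\frac{1}{n(2n-1)}$ for $m_1<j\le m_2$, $a_{ij}=\frac1r$ for $m_2<j<i$; and $a_{ij}=0$ for $j\ge i$. Let $c=A\mathbf e$ and $\tilde b=\frac1{n^2}\mathbf e$. Then the explicit Runge--Kutta method $(A,\tilde b)$ has order two ($\tilde b^T\mathbf e=1$, $\tilde b^Tc=\frac12$), it is non-defective, i.e. it violates both third-order conditions: $\tilde b^Tc^2\neq\frac13$ and $\tilde b^T\big(\frac{c^2}{2}-Ac\big)\neq 0$, and its SSP coefficient is positive.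
   Context: An explicit $s$-stage Runge--Kutta method with strictly lower triangular coefficient matrix $A$ and weight vector $b$ is denoted $(A,b)$; $\mathbf e=(1,\dots,1)^T$, $c=A\mathbf e$, and powers of vectors such as $c^2$ are taken componentwise. SSP coefficient: with $K=\begin{pmatrix}A&0\\ b^T&0\end{pmatrix}\in\mathbb{R}^{(s+1)\times(s+1)}$, the SSP coefficient of $(A,b)$ is $\mathcal C(A,b)=\sup\{r\ge 0:\ (I+rK)^{-1}\text{ exists},\ K(I+rK)^{-1}\ge 0,\ rK(I+rK)^{-1}\mathbf e\le \mathbf e\}$, inequalities taken componentwise. *)

theory Defs
  imports Complex_Main "HOL-Library.Extended_Real"
begin

text \<open>Matrices and vectors are represented as functions on natural-number indices,
  with 1-based indices; an s-stage method uses indices 1..s, and the SSP matrix K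
  uses indices 1..s+1.\<close>

definition mat_mul :: "nat \<Rightarrow> (nat \<Rightarrow> nat \<Rightarrow> real) \<Rightarrow> (nat \<Rightarrow> nat \<Rightarrow> real) \<Rightarrow> nat \<Rightarrow> nat \<Rightarrow> real" where
  "mat_mul N X Y i j = (\<Sum>k = 1..N. X i k * Y k j)"

definition id_mat :: "nat \<Rightarrow> nat \<Rightarrow> real" where
  "id_mat i j = (if i = j then 1 else 0)"

definition rk_c :: "nat \<Rightarrow> (nat \<Rightarrow> nat \<Rightarrow> real) \<Rightarrow> nat \<Rightarrow> real" where
  "rk_c s A i = (\<Sum>j = 1..s. A i j)"

text \<open>K = [[A, 0], [b^T, 0]], of size (s+1) x (s+1)\<close>
definition ssp_K :: "nat \<Rightarrow> (nat \<Rightarrow> nat \<Rightarrow> real) \<Rightarrow> (nat \<Rightarrow> real) \<Rightarrow> nat \<Rightarrow> nat \<Rightarrow> real" where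
  "ssp_K s A b i j = (if j \<le> s then (if i \<le> s then A i j else b j) else 0)"

definition ssp_admissible :: "nat \<Rightarrow> (nat \<Rightarrow> nat \<Rightarrow> real) \<Rightarrow> (nat \<Rightarrow> real) \<Rightarrow> real \<Rightarrow> bool" where
  "ssp_admissible s A b r \<longleftrightarrow> r \<ge> 0 \<and>
     (let N = s + 1; K = ssp_K s A b; P = (\<lambda>i j. id_mat i j + r * K i j) in
      (\<exists>M. (\<forall>i\<in>{1..N}. \<forall>j\<in>{1..N}. mat_mul N P M i j = id_mat i j \<and> mat_mul N M P i j = id_mat i j)
         \<and> (\<forall>i\<in>{1..N}. \<forall>j\<in>{1..N}. mat_mul N K M i j \<ge> 0)
         \<and> (\<forall>i\<in>{1..N}. r * (\<Sum>j = 1..N. mat_mul N K M i j) \<le> 1)))"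

definition ssp_coeff :: "nat \<Rightarrow> (nat \<Rightarrow> nat \<Rightarrow> real) \<Rightarrow> (nat \<Rightarrow> real) \<Rightarrow> ereal" where
  "ssp_coeff s A b = Sup (ereal ` {r. ssp_admissible s A b r})"

definition ssperk_A :: "nat \<Rightarrow> nat \<Rightarrow> nat \<Rightarrow> real" where
  "ssperk_A n i j =
    (let r = real (n * (n - 1)); m1 = (n - 1) * (n - 2) div 2; m2 = n * (n + 1) div 2 in
     if j \<ge> i then 0
     else if i \<le> m2 then 1 / r
     else if j \<le> m1 then 1 / r
     else if j \<le> m2 then 1 / real (n * (2 * n - 1))
     else 1 / r)"

end

theory Submission
  imports Defs
begin

text \<open>The order conditions are checked by computing the abscissae explicitly: on the first m2 stages
  c_i = (i - 1)/r, and on the remaining p = n(n-1)/2 stages c = 1/2 + t/r for t = 0, ..., p - 1.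
  Every sum in question thereby becomes a sum of quadratic polynomials over two index ranges; in
  particular b^T c^2 = 1/3 - (n^2 - n - 4)/(12 n^2 (n - 1)) and b^T (c^2/2 - A c) = 1/(4 n^2 (n - 1)),
  and n^2 - n - 4 has no integer root.

  For the SSP coefficient, K is strictly lower triangular with all subdiagonal entries in [a, 1],
  a = 1/(2 n^2). For 0 \<le> r \<le> a/(s + 1) the inverse of I + r K is given by forward substitution,
  and X = K (I + r K)^-1 satisfies X = K - r K X, so an induction over the rows keeps 0 \<le> X \<le> K.\<close>

definition strictly_lower :: "nat \<Rightarrow> (nat \<Rightarrow> nat \<Rightarrow> real) \<Rightarrow> bool" where
  "strictly_lower N L \<longleftrightarrow> (\<forall>i\<in>{1..N}. \<forall>j\<in>{1..N}. i \<le> j \<longrightarrow> L i j = 0)"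

function fwd_subst_inv :: "(nat \<Rightarrow> nat \<Rightarrow> real) \<Rightarrow> nat \<Rightarrow> nat \<Rightarrow> real" where
  "fwd_subst_inv L i j = id_mat i j - (\<Sum>k\<in>{1..<i}. L i k * fwd_subst_inv L k j)"
  by auto
termination by (relation "measure (\<lambda>(L, i, j). i)") auto

function bwd_subst_inv :: "nat \<Rightarrow> (nat \<Rightarrow> nat \<Rightarrow> real) \<Rightarrow> nat \<Rightarrow> nat \<Rightarrow> real" where
  "bwd_subst_inv N L i j = id_mat i j - (\<Sum>k\<in>{j<..N}. bwd_subst_inv N L i k * L k j)"
  by auto
termination by (relation "measure (\<lambda>(N, L, i, j). N - j)") auto

declare fwd_subst_inv.simps [simp del] bwd_subst_inv.simps [simp del]

lemma mat_mul_assoc: "mat_mul N (mat_mul N X Y) Z i j = mat_mul N X (mat_mul N Y Z) i j"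
  unfolding mat_mul_def
  by (simp add: sum_distrib_left sum_distrib_right mult.assoc) (rule sum.swap)

lemma sum_id_mat_left: "i \<in> {1..N} \<Longrightarrow> (\<Sum>k = 1..N. id_mat i k * f k) = f i"
  by (simp add: id_mat_def if_distrib[of "\<lambda>x. x * f _"] sum.delta cong: if_cong)

lemma sum_id_mat_right: "j \<in> {1..N} \<Longrightarrow> (\<Sum>k = 1..N. f k * id_mat k j) = f j"
  by (simp add: id_mat_def if_distrib[of "\<lambda>x. f _ * x"] sum.delta' cong: if_cong)

lemma strictly_lower_sum_left:
  "strictly_lower N L \<Longrightarrow> i \<in> {1..N} \<Longrightarrow> (\<Sum>k = 1..N. L i k * f k) = (\<Sum>k\<in>{1..<i}. L i k * f k)"
  by (rule sum.mono_neutral_right) (auto simp: strictly_lower_def)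

lemma strictly_lower_sum_right:
  "strictly_lower N L \<Longrightarrow> j \<in> {1..N} \<Longrightarrow> (\<Sum>k = 1..N. f k * L k j) = (\<Sum>k\<in>{j<..N}. f k * L k j)"
  by (rule sum.mono_neutral_right) (auto simp: strictly_lower_def)

lemma mat_mul_fwd_subst_inv:
  assumes "strictly_lower N L" "i \<in> {1..N}"
  shows "mat_mul N (\<lambda>i j. id_mat i j + L i j) (fwd_subst_inv L) i j = id_mat i j"
proof -
  have "mat_mul N (\<lambda>i j. id_mat i j + L i j) (fwd_subst_inv L) i j
      = fwd_subst_inv L i j + (\<Sum>k\<in>{1..<i}. L i k * fwd_subst_inv L k j)"
    unfolding mat_mul_def distrib_right sum.distrib
      sum_id_mat_left[OF assms(2)] strictly_lower_sum_left[OF assms] ..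
  also have "\<dots> = id_mat i j"
    by (simp add: fwd_subst_inv.simps[of L i j])
  finally show ?thesis .
qed

lemma mat_mul_bwd_subst_inv:
  assumes "strictly_lower N L" "j \<in> {1..N}"
  shows "mat_mul N (bwd_subst_inv N L) (\<lambda>i j. id_mat i j + L i j) i j = id_mat i j"
proof -
  have "mat_mul N (bwd_subst_inv N L) (\<lambda>i j. id_mat i j + L i j) i j
      = bwd_subst_inv N L i j + (\<Sum>k\<in>{j<..N}. bwd_subst_inv N L i k * L k j)"
    unfolding mat_mul_def distrib_left sum.distrib
      sum_id_mat_right[OF assms(2)] strictly_lower_sum_right[OF assms] ..
  also have "\<dots> = id_mat i j"
    by (simp add: bwd_subst_inv.simps[of N L i j])
  finally show ?thesis .
qed

lemma left_inverse_eq_right_inverse: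
  assumes "\<forall>i\<in>{1..N}. \<forall>j\<in>{1..N}. mat_mul N X P i j = id_mat i j"
    and "\<forall>i\<in>{1..N}. \<forall>j\<in>{1..N}. mat_mul N P Y i j = id_mat i j"
    and i: "i \<in> {1..N}" and j: "j \<in> {1..N}"
  shows "X i j = Y i j"
proof -
  have "X i j = (\<Sum>k = 1..N. X i k * id_mat k j)"
    by (rule sum_id_mat_right[OF j, symmetric])
  also have "\<dots> = mat_mul N X (mat_mul N P Y) i j"
    unfolding mat_mul_def[of N X] using assms(2) j by (intro sum.cong) auto
  also have "\<dots> = mat_mul N (mat_mul N X P) Y i j"
    by (simp add: mat_mul_assoc)
  also have "\<dots> = (\<Sum>k = 1..N. id_mat i k * Y k j)"
    unfolding mat_mul_def[of N "mat_mul N X P"] using assms(1) i by (intro sum.cong) auto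
  also have "\<dots> = Y i j"
    by (rule sum_id_mat_left[OF i])
  finally show ?thesis .
qed

lemma inverse_fwd_subst_inv:
  assumes "strictly_lower N L" "i \<in> {1..N}" "j \<in> {1..N}"
  shows "mat_mul N (\<lambda>i j. id_mat i j + L i j) (fwd_subst_inv L) i j = id_mat i j
    \<and> mat_mul N (fwd_subst_inv L) (\<lambda>i j. id_mat i j + L i j) i j = id_mat i j"
proof -
  let ?P = "\<lambda>i j. id_mat i j + L i j"
  have right: "\<forall>i\<in>{1..N}. \<forall>j\<in>{1..N}. mat_mul N ?P (fwd_subst_inv L) i j = id_mat i j"
    using mat_mul_fwd_subst_inv[OF assms(1)] by blast
  have left: "\<forall>i\<in>{1..N}. \<forall>j\<in>{1..N}. mat_mul N (bwd_subst_inv N L) ?P i j = id_mat i j"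
    using mat_mul_bwd_subst_inv[OF assms(1)] by blast
  have "bwd_subst_inv N L i k = fwd_subst_inv L i k" if "k \<in> {1..N}" for k
    using left_inverse_eq_right_inverse[OF left right assms(2) that] .
  then have "mat_mul N (fwd_subst_inv L) ?P i j = mat_mul N (bwd_subst_inv N L) ?P i j"
    by (simp add: mat_mul_def)
  then show ?thesis
    using left right assms(2,3) by simp
qed

lemma scaled_mat_mul_self_le:
  assumes "strictly_lower N K"
    and bounds: "\<forall>i\<in>{1..N}. \<forall>j\<in>{1..N}. 0 \<le> K i j \<and> K i j \<le> 1"
    and below: "\<forall>i\<in>{1..N}. \<forall>j\<in>{1..N}. j < i \<longrightarrow> \<alpha> \<le> K i j"
    and "0 \<le> r" "r * N \<le> \<alpha>" and i: "i \<in> {1..N}" and j: "j \<in> {1..N}"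
  shows "r * mat_mul N K K i j \<le> K i j"
proof (cases "j < i")
  case True
  have "mat_mul N K K i j \<le> (\<Sum>l = 1..N. 1)"
    unfolding mat_mul_def by (rule sum_mono) (use bounds i j in \<open>auto intro: mult_le_one\<close>)
  then have "r * mat_mul N K K i j \<le> r * N"
    using \<open>0 \<le> r\<close> by (simp add: mult_left_mono)
  also have "\<dots> \<le> K i j"
    using \<open>r * N \<le> \<alpha>\<close> below i j True by fastforce
  finally show ?thesis .
next
  case False
  have "K i l * K l j = 0" if "l \<in> {1..N}" for l
    using \<open>strictly_lower N K\<close> False i j that
    by (cases "l < i") (auto simp: strictly_lower_def)
  then have "mat_mul N K K i j = 0"
    unfolding mat_mul_def by (intro sum.neutral) blast
  then show ?thesis
    using bounds i j by simp
qed

lemma mat_mul_fwd_subst_inv_bounds: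
  assumes low: "strictly_lower N K"
    and bounds: "\<forall>i\<in>{1..N}. \<forall>j\<in>{1..N}. 0 \<le> K i j \<and> K i j \<le> 1"
    and below: "\<forall>i\<in>{1..N}. \<forall>j\<in>{1..N}. j < i \<longrightarrow> \<alpha> \<le> K i j"
    and "0 \<le> r" "r * N \<le> \<alpha>" and "i \<in> {1..N}" and j: "j \<in> {1..N}"
  defines "X \<equiv> mat_mul N K (fwd_subst_inv (\<lambda>i j. r * K i j))"
  shows "0 \<le> X i j \<and> X i j \<le> K i j"
proof -
  let ?M = "fwd_subst_inv (\<lambda>i j. r * K i j)"
  have inv_eq: "?M l j = id_mat l j - r * X l j" if "l \<in> {1..N}" for l
  proof -
    have "(\<Sum>k\<in>{1..<l}. r * K l k * ?M k j) = r * X l j"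
      using strictly_lower_sum_left[OF low that, of "\<lambda>k. ?M k j"]
      by (simp add: X_def mat_mul_def sum_distrib_left mult.assoc)
    then show ?thesis
      by (simp add: fwd_subst_inv.simps[of _ l])
  qed
  have X_eq: "X i j = K i j - r * mat_mul N K X i j" for i
  proof -
    have "X i j = (\<Sum>l = 1..N. K i l * ?M l j)"
      by (simp add: X_def mat_mul_def)
    also have "\<dots> = (\<Sum>l = 1..N. K i l * (id_mat l j - r * X l j))"
      by (intro sum.cong) (simp_all add: inv_eq)
    finally show ?thesis
      using sum_id_mat_right[OF j, of "K i"]
      by (simp add: mat_mul_def right_diff_distrib sum_subtractf sum_distrib_left algebra_simps)
  qed
  txt \<open>Row i of K X only involves the rows l < i of X, as K is strictly lower triangular.\<close>
  show ?thesis
    using \<open>i \<in> {1..N}\<close>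
  proof (induction i rule: less_induct)
    case (less i)
    have term_bounds: "0 \<le> K i l * X l j \<and> K i l * X l j \<le> K i l * K l j" if "l \<in> {1..N}" for l
    proof (cases "l < i")
      case True
      then show ?thesis
        using less.IH[OF True that] bounds less.prems that by (simp add: mult_left_mono)
    next
      case False
      then show ?thesis
        using low less.prems that by (simp add: strictly_lower_def)
    qed
    have "0 \<le> mat_mul N K X i j"
      unfolding mat_mul_def by (rule sum_nonneg) (use term_bounds in auto)
    then have "0 \<le> r * mat_mul N K X i j"
      using \<open>0 \<le> r\<close> by simp
    have "mat_mul N K X i j \<le> mat_mul N K K i j"
      unfolding mat_mul_def by (rule sum_mono) (use term_bounds in auto)
    then have "r * mat_mul N K X i j \<le> r * mat_mul N K K i j"
      using \<open>0 \<le> r\<close> by (rule mult_left_mono)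
    moreover have "r * mat_mul N K K i j \<le> K i j"
      using scaled_mat_mul_self_le[OF low bounds below \<open>0 \<le> r\<close> \<open>r * N \<le> \<alpha>\<close> less.prems j] .
    ultimately show ?case
      using X_eq[of i] \<open>0 \<le> r * mat_mul N K X i j\<close> by linarith
  qed
qed

lemma ssp_admissible_if_entries_bounded:
  fixes \<alpha> r :: real
  assumes A_upper: "\<And>i j. i \<in> {1..s} \<Longrightarrow> i \<le> j \<Longrightarrow> A i j = 0"
    and A_lower: "\<And>i j. i \<in> {1..s} \<Longrightarrow> j \<in> {1..s} \<Longrightarrow> j < i \<Longrightarrow> \<alpha> \<le> A i j \<and> A i j \<le> 1"
    and b: "\<And>j. j \<in> {1..s} \<Longrightarrow> \<alpha> \<le> b j \<and> b j \<le> 1"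
    and "0 \<le> r" "r * real (s + 1) \<le> \<alpha>" "\<alpha> \<le> 1"
  shows "ssp_admissible s A b r"
proof -
  define N where "N = s + 1"
  define K where "K = ssp_K s A b"
  define M where "M = fwd_subst_inv (\<lambda>i j. r * K i j)"
  have "0 \<le> r * real (s + 1)"
    using \<open>0 \<le> r\<close> by simp
  then have "0 \<le> \<alpha>"
    using \<open>r * real (s + 1) \<le> \<alpha>\<close> by linarith
  have low: "strictly_lower N K"
    using A_upper by (auto simp: strictly_lower_def K_def N_def ssp_K_def)
  have bounds: "\<forall>i\<in>{1..N}. \<forall>j\<in>{1..N}. 0 \<le> K i j \<and> K i j \<le> 1"
  proof (intro ballI)
    fix i j assume "i \<in> {1..N}" "j \<in> {1..N}"
    then show "0 \<le> K i j \<and> K i j \<le> 1"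
      using A_upper[of i j] A_lower[of i j] b[of j] \<open>0 \<le> \<alpha>\<close>
      unfolding K_def N_def ssp_K_def by (cases "j < i") auto
  qed
  have below: "\<forall>i\<in>{1..N}. \<forall>j\<in>{1..N}. j < i \<longrightarrow> \<alpha> \<le> K i j"
    using A_lower b by (auto simp: K_def N_def ssp_K_def)
  have rN: "r * N \<le> \<alpha>"
    using \<open>r * real (s + 1) \<le> \<alpha>\<close> by (simp add: N_def)
  have KM: "0 \<le> mat_mul N K M i j \<and> mat_mul N K M i j \<le> K i j" if "i \<in> {1..N}" "j \<in> {1..N}" for i j
    unfolding M_def by (rule mat_mul_fwd_subst_inv_bounds[OF low bounds below \<open>0 \<le> r\<close> rN that])
  have row_sum: "r * (\<Sum>j = 1..N. mat_mul N K M i j) \<le> 1" if "i \<in> {1..N}" for i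
  proof -
    have "(\<Sum>j = 1..N. mat_mul N K M i j) \<le> (\<Sum>j = 1..N. 1)"
      by (rule sum_mono) (use KM[OF that] bounds that in force)
    then have "r * (\<Sum>j = 1..N. mat_mul N K M i j) \<le> r * N"
      using \<open>0 \<le> r\<close> by (simp add: mult_left_mono)
    then show ?thesis
      using rN \<open>\<alpha> \<le> 1\<close> by linarith
  qed
  have inverse: "mat_mul N (\<lambda>i j. id_mat i j + r * K i j) M i j = id_mat i j
      \<and> mat_mul N M (\<lambda>i j. id_mat i j + r * K i j) i j = id_mat i j"
    if "i \<in> {1..N}" "j \<in> {1..N}" for i j
    unfolding M_def
    by (rule inverse_fwd_subst_inv) (use low that in \<open>simp_all add: strictly_lower_def\<close>)
  show ?thesis
    unfolding ssp_admissible_def Let_def K_def[symmetric] N_def[symmetric]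
    using \<open>0 \<le> r\<close> inverse KM row_sum by (intro conjI exI[of _ M] ballI) blast+
qed

lemma ssp_coeff_pos_if_entries_bounded:
  fixes \<alpha> :: real
  assumes "\<And>i j. i \<in> {1..s} \<Longrightarrow> i \<le> j \<Longrightarrow> A i j = 0"
    and "\<And>i j. i \<in> {1..s} \<Longrightarrow> j \<in> {1..s} \<Longrightarrow> j < i \<Longrightarrow> \<alpha> \<le> A i j \<and> A i j \<le> 1"
    and "\<And>j. j \<in> {1..s} \<Longrightarrow> \<alpha> \<le> b j \<and> b j \<le> 1"
    and "0 < \<alpha>" "\<alpha> \<le> 1"
  shows "0 < ssp_coeff s A b"
proof -
  define r where "r = \<alpha> / real (s + 1)"
  have "ssp_admissible s A b r"
    using assms by (intro ssp_admissible_if_entries_bounded) (simp_all add: r_def)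
  have "0 < ereal r"
    using \<open>0 < \<alpha>\<close> by (simp add: r_def)
  also have "ereal r \<le> ssp_coeff s A b"
    unfolding ssp_coeff_def using \<open>ssp_admissible s A b r\<close> by (intro Sup_upper) simp
  finally show ?thesis .
qed

lemma sum_lessThan_add_split:
  fixes f :: "nat \<Rightarrow> 'a::comm_monoid_add"
  shows "(\<Sum>i<a + b. f i) = (\<Sum>i<a. f i) + (\<Sum>i<b. f (a + i))"
  by (induction b) (simp_all add: add.assoc)

lemma sum_of_nat_lessThan: "(\<Sum>k<m. real k) = real m * (real m - 1) / 2"
  by (induction m) (simp_all add: field_simps)

lemma sum_of_squares_lessThan: "(\<Sum>k<m. real k ^ 2) = real m * (real m - 1) * (2 * real m - 1) / 6"
  by (induction m) (simp_all add: field_simps power2_eq_square)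

lemma real_half_consecutive_product: "real (k * (k + 1) div 2) = real k * (real k + 1) / 2"
  by (simp add: real_of_nat_div algebra_simps)

locale ssperk =
  fixes n :: nat
  assumes two_le_n: "2 \<le> n"
begin

definition m1 :: nat where "m1 = (n - 1) * (n - 2) div 2"
definition m2 :: nat where "m2 = n * (n + 1) div 2"
definition p :: nat where "p = n * (n - 1) div 2"
definition R :: real where "R = real (n * (n - 1))"
definition Q :: real where "Q = real (n * (2 * n - 1))"

abbreviation c :: "nat \<Rightarrow> real" where
  "c \<equiv> rk_c (n ^ 2) (ssperk_A n)"

lemma real_m1: "real m1 = (real n - 1) * (real n - 2) / 2"
proof -
  obtain k where n: "n = k + 2"
    using two_le_n le_Suc_ex by (metis add.commute)
  then have "(n - 1) * (n - 2) = k * (k + 1)"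
    by simp
  then show ?thesis
    unfolding m1_def using real_half_consecutive_product[of k] n by simp
qed

lemma real_m2: "real m2 = real n * (real n + 1) / 2"
  unfolding m2_def by (rule real_half_consecutive_product)

lemma R_eq: "R = real n * (real n - 1)"
  using two_le_n by (simp add: R_def of_nat_diff)

lemma Q_eq: "Q = real n * (2 * real n - 1)"
  using two_le_n by (simp add: Q_def of_nat_diff)

lemma real_p: "real p = R / 2"
proof -
  obtain k where n: "n = k + 1"
    using two_le_n le_Suc_ex by (metis add.commute le_trans one_le_numeral)
  then have "n * (n - 1) = k * (k + 1)"
    by simp
  then show ?thesis
    unfolding p_def R_eq using real_half_consecutive_product[of k] n by (simp add: algebra_simps)
qed

lemma R_pos: "0 < R"
  using two_le_n by (simp add: R_eq)

lemma Q_pos: "0 < Q"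
  using two_le_n by (simp add: Q_eq)

lemma m1_le_m2: "m1 \<le> m2"
proof -
  have "real m1 \<le> real m2"
    using two_le_n by (simp add: real_m1 real_m2 field_simps)
  then show ?thesis
    by simp
qed

lemma stage_count: "n ^ 2 = m2 + p"
proof -
  have "real (n ^ 2) = real (m2 + p)"
    by (simp add: real_m2 real_p R_eq field_simps power2_eq_square)
  then show ?thesis
    by (simp only: of_nat_eq_iff)
qed

lemma ssperk_A_eq:
  "ssperk_A n i j = (if i \<le> j then 0 else if m2 < i \<and> m1 < j \<and> j \<le> m2 then 1 / Q else 1 / R)"
  unfolding ssperk_A_def Let_def m1_def m2_def R_def Q_def by auto

lemma strictly_lower_ssperk_A: "strictly_lower (n ^ 2) (ssperk_A n)"
  by (simp add: strictly_lower_def ssperk_A_eq)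

lemma row_sum_below_diagonal:
  assumes "Suc i \<le> n ^ 2"
  shows "(\<Sum>j = 1..n ^ 2. ssperk_A n (Suc i) j * f j) = (\<Sum>j<i. ssperk_A n (Suc i) (Suc j) * f (Suc j))"
proof -
  have "(\<Sum>j = 1..n ^ 2. ssperk_A n (Suc i) j * f j) = (\<Sum>j\<in>{Suc 0..<Suc i}. ssperk_A n (Suc i) j * f j)"
    using strictly_lower_sum_left[OF strictly_lower_ssperk_A] assms by simp
  also have "\<dots> = (\<Sum>j<i. ssperk_A n (Suc i) (Suc j) * f (Suc j))"
    using sum.shift_bounds_Suc_ivl[of "\<lambda>j. ssperk_A n (Suc i) j * f j" 0 i]
    by (simp only: atLeast0LessThan)
  finally show ?thesis .
qed

lemma row_sum_first_block:
  assumes "i < m2"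
  shows "(\<Sum>j = 1..n ^ 2. ssperk_A n (Suc i) j * f j) = (\<Sum>j<i. f (Suc j)) / R"
proof -
  have "Suc i \<le> n ^ 2"
    using assms stage_count by simp
  then show ?thesis
    unfolding row_sum_below_diagonal[OF \<open>Suc i \<le> n ^ 2\<close>]
    using assms by (simp add: ssperk_A_eq sum_divide_distrib)
qed

lemma row_sum_second_block:
  assumes "t < p"
  shows "(\<Sum>j = 1..n ^ 2. ssperk_A n (Suc (m2 + t)) j * f j)
    = (\<Sum>j<m1. f (Suc j)) / R + (\<Sum>j\<in>{m1..<m2}. f (Suc j)) / Q + (\<Sum>u<t. f (Suc (m2 + u))) / R"
proof -
  let ?a = "ssperk_A n (Suc (m2 + t))"
  have "Suc (m2 + t) \<le> n ^ 2"
    using assms stage_count by simp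
  then have "(\<Sum>j = 1..n ^ 2. ?a j * f j) = (\<Sum>j<m2 + t. ?a (Suc j) * f (Suc j))"
    by (rule row_sum_below_diagonal)
  also have "\<dots> = (\<Sum>j<m1. ?a (Suc j) * f (Suc j)) + (\<Sum>j\<in>{m1..<m2}. ?a (Suc j) * f (Suc j))
      + (\<Sum>u<t. ?a (Suc (m2 + u)) * f (Suc (m2 + u)))"
    using sum.atLeastLessThan_concat[OF _ m1_le_m2, of 0 "\<lambda>j. ?a (Suc j) * f (Suc j)"]
    by (simp add: sum_lessThan_add_split atLeast0LessThan)
  also have "\<dots> = (\<Sum>j<m1. f (Suc j)) / R + (\<Sum>j\<in>{m1..<m2}. f (Suc j)) / Q + (\<Sum>u<t. f (Suc (m2 + u))) / R"
    using m1_le_m2 by (simp add: ssperk_A_eq sum_divide_distrib)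
  finally show ?thesis .
qed

lemma c_first_block: "i < m2 \<Longrightarrow> c (Suc i) = real i / R"
  using row_sum_first_block[of i "\<lambda>_. 1"] by (simp add: rk_c_def)

lemma c_second_block:
  assumes "t < p"
  shows "c (Suc (m2 + t)) = 1 / 2 + real t / R"
proof -
  have "c (Suc (m2 + t)) = real m1 / R + (real m2 - real m1) / Q + real t / R"
    using row_sum_second_block[OF assms, of "\<lambda>_. 1"] m1_le_m2 by (simp add: rk_c_def of_nat_diff)
  also have "real m1 / R + (real m2 - real m1) / Q = 1 / 2"
    using two_le_n by (simp add: real_m1 real_m2 R_eq Q_eq divide_simps) (simp add: algebra_simps)
  finally show ?thesis
    by simp
qed

lemma Ac_first_block:
  assumes "i < m2"
  shows "(\<Sum>j = 1..n ^ 2. ssperk_A n (Suc i) j * c j) = real i * (real i - 1) / (2 * R ^ 2)"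
proof -
  have "(\<Sum>j<i. c (Suc j)) = (\<Sum>j<i. real j) / R"
    unfolding sum_divide_distrib by (rule sum.cong) (use assms in \<open>simp_all add: c_first_block\<close>)
  then show ?thesis
    unfolding row_sum_first_block[OF assms] by (simp add: sum_of_nat_lessThan power2_eq_square)
qed

lemma Ac_second_block:
  assumes "t < p"
  shows "(\<Sum>j = 1..n ^ 2. ssperk_A n (Suc (m2 + t)) j * c j)
    = 1 / 8 + 1 / (4 * R) + real t / (2 * R) + real t * (real t - 1) / (2 * R ^ 2)"
proof -
  have head: "(\<Sum>j<m1. c (Suc j)) = (\<Sum>j<m1. real j) / R"
    unfolding sum_divide_distrib by (rule sum.cong) (use m1_le_m2 in \<open>simp_all add: c_first_block\<close>)
  have "(\<Sum>j\<in>{m1..<m2}. c (Suc j)) = (\<Sum>j\<in>{m1..<m2}. real j) / R"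
    unfolding sum_divide_distrib by (rule sum.cong) (simp_all add: c_first_block)
  also have "\<dots> = ((\<Sum>j<m2. real j) - (\<Sum>j<m1. real j)) / R"
    using sum_diff_nat_ivl[OF _ m1_le_m2, of 0 real] by (simp add: atLeast0LessThan)
  finally have middle: "(\<Sum>j\<in>{m1..<m2}. c (Suc j)) = ((\<Sum>j<m2. real j) - (\<Sum>j<m1. real j)) / R" .
  have tail: "(\<Sum>u<t. c (Suc (m2 + u))) = real t / 2 + (\<Sum>u<t. real u) / R"
  proof -
    have "(\<Sum>u<t. c (Suc (m2 + u))) = (\<Sum>u<t. 1 / 2 + real u / R)"
      by (rule sum.cong) (use assms in \<open>simp_all add: c_second_block\<close>)
    then show ?thesis
      by (simp add: sum.distrib sum_divide_distrib)
  qed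
  have offset: "real m1 * (real m1 - 1) / (2 * R ^ 2) + (real m2 * (real m2 - 1) - real m1 * (real m1 - 1)) / (2 * R * Q)
      = 1 / 8 + 1 / (4 * R)"
    using two_le_n by (simp add: real_m1 real_m2 R_eq Q_eq divide_simps) (simp add: algebra_simps power2_eq_square)
  have "(\<Sum>j = 1..n ^ 2. ssperk_A n (Suc (m2 + t)) j * c j)
      = (real m1 * (real m1 - 1) / (2 * R ^ 2) + (real m2 * (real m2 - 1) - real m1 * (real m1 - 1)) / (2 * R * Q))
        + real t / (2 * R) + real t * (real t - 1) / (2 * R ^ 2)"
    unfolding row_sum_second_block[OF assms] head middle tail sum_of_nat_lessThan
    using R_pos Q_pos by (simp add: field_simps power2_eq_square)
  then show ?thesis
    unfolding offset .
qed

lemma sum_over_blocks: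
  "(\<Sum>i = 1..n ^ 2. F i) = (\<Sum>i<m2. F (Suc i)) + (\<Sum>t<p. F (Suc (m2 + t)))"
  by (simp add: sum.atLeast1_atMost_eq stage_count sum_lessThan_add_split)

lemma sum_c: "(\<Sum>i = 1..n ^ 2. c i) = real n ^ 2 / 2"
proof -
  have first: "(\<Sum>i<m2. c (Suc i)) = (\<Sum>i<m2. real i) / R"
    unfolding sum_divide_distrib by (rule sum.cong) (simp_all add: c_first_block)
  have "(\<Sum>t<p. c (Suc (m2 + t))) = (\<Sum>t<p. 1 / 2 + real t / R)"
    by (rule sum.cong) (simp_all add: c_second_block)
  then have second: "(\<Sum>t<p. c (Suc (m2 + t))) = real p / 2 + (\<Sum>t<p. real t) / R"
    by (simp add: sum.distrib sum_divide_distrib)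
  show ?thesis
    unfolding sum_over_blocks[of c] first second sum_of_nat_lessThan
    using two_le_n by (simp add: real_m2 real_p R_eq divide_simps) (simp add: algebra_simps power2_eq_square)
qed

lemma sum_c_squared:
  "(\<Sum>i = 1..n ^ 2. c i ^ 2) = real n ^ 2 / 3 - (real n ^ 2 - real n - 4) / (12 * (real n - 1))"
proof -
  have first: "(\<Sum>i<m2. c (Suc i) ^ 2) = (\<Sum>i<m2. real i ^ 2) / R ^ 2"
    unfolding sum_divide_distrib by (rule sum.cong) (simp_all add: c_first_block power_divide)
  have "c (Suc (m2 + t)) ^ 2 = 1 / 4 + real t / R + real t ^ 2 / R ^ 2" if "t < p" for t
    unfolding c_second_block[OF that] using R_pos by (simp add: field_simps power2_eq_square)
  then have "(\<Sum>t<p. c (Suc (m2 + t)) ^ 2) = (\<Sum>t<p. 1 / 4 + real t / R + real t ^ 2 / R ^ 2)"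
    by (intro sum.cong) simp_all
  then have second: "(\<Sum>t<p. c (Suc (m2 + t)) ^ 2)
      = real p / 4 + (\<Sum>t<p. real t) / R + (\<Sum>t<p. real t ^ 2) / R ^ 2"
    by (simp add: sum.distrib sum_divide_distrib)
  show ?thesis
    unfolding sum_over_blocks[of "\<lambda>i. c i ^ 2"] first second sum_of_nat_lessThan sum_of_squares_lessThan
    using two_le_n by (simp add: real_m2 real_p R_eq divide_simps) (simp add: algebra_simps power2_eq_square)
qed

lemma sum_half_c_squared_minus_Ac:
  "(\<Sum>i = 1..n ^ 2. c i ^ 2 / 2 - (\<Sum>j = 1..n ^ 2. ssperk_A n i j * c j)) = 1 / (4 * (real n - 1))"
proof -
  let ?d = "\<lambda>i. c i ^ 2 / 2 - (\<Sum>j = 1..n ^ 2. ssperk_A n i j * c j)"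
  have "?d (Suc i) = real i / (2 * R ^ 2)" if "i < m2" for i
    unfolding c_first_block[OF that] Ac_first_block[OF that] using R_pos by (simp add: field_simps power2_eq_square)
  then have first: "(\<Sum>i<m2. ?d (Suc i)) = (\<Sum>i<m2. real i) / (2 * R ^ 2)"
    unfolding sum_divide_distrib by (intro sum.cong) simp_all
  have "?d (Suc (m2 + t)) = real t / (2 * R ^ 2) - 1 / (4 * R)" if "t < p" for t
    unfolding c_second_block[OF that] Ac_second_block[OF that] using R_pos by (simp add: field_simps power2_eq_square)
  then have "(\<Sum>t<p. ?d (Suc (m2 + t))) = (\<Sum>t<p. real t / (2 * R ^ 2) - 1 / (4 * R))"
    by (intro sum.cong) simp_all
  then have second: "(\<Sum>t<p. ?d (Suc (m2 + t))) = (\<Sum>t<p. real t) / (2 * R ^ 2) - real p / (4 * R)"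
    by (simp add: sum_subtractf sum_divide_distrib)
  show ?thesis
    unfolding sum_over_blocks[of ?d] first second sum_of_nat_lessThan
    using two_le_n by (simp add: real_m2 real_p R_eq divide_simps) (simp add: algebra_simps power2_eq_square)
qed

lemma sum_c_squared_ne: "(\<Sum>i = 1..n ^ 2. c i ^ 2) \<noteq> real n ^ 2 / 3"
proof -
  have "real n ^ 2 - real n - 4 \<noteq> 0"
  proof (cases "n = 2")
    case False
    then have "3 \<le> real n"
      using two_le_n by simp
    then have "3 * 2 \<le> real n * (real n - 1)"
      by (intro mult_mono) auto
    then show ?thesis
      by (simp add: power2_eq_square algebra_simps)
  qed simp
  then show ?thesis
    unfolding sum_c_squared using two_le_n by (simp add: field_simps)
qed

lemma ssp_coeff_pos: "0 < ssp_coeff (n ^ 2) (ssperk_A n) (\<lambda>i. 1 / real (n ^ 2))"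
proof (rule ssp_coeff_pos_if_entries_bounded)
  let ?\<alpha> = "1 / (2 * real n ^ 2)"
  have n: "2 \<le> real n"
    using two_le_n by simp
  have inverse_bounds: "?\<alpha> \<le> 1 / x \<and> 1 / x \<le> 1" if "1 \<le> x" "x \<le> 2 * real n ^ 2" for x :: real
    using that n by (auto simp: field_simps)
  have "2 * 1 \<le> real n * (real n - 1)" "2 * 3 \<le> real n * (2 * real n - 1)" "2 * 2 \<le> real n * real n"
    using n by (intro mult_mono; simp)+
  then have bounds: "1 \<le> R" "R \<le> 2 * real n ^ 2" "1 \<le> Q" "Q \<le> 2 * real n ^ 2"
      "1 \<le> real n ^ 2" "real n ^ 2 \<le> 2 * real n ^ 2"
    using n by (simp_all add: R_eq Q_eq power2_eq_square algebra_simps)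
  show "?\<alpha> \<le> ssperk_A n i j \<and> ssperk_A n i j \<le> 1" if "j < i" for i j
    using that inverse_bounds bounds by (simp add: ssperk_A_eq)
  show "?\<alpha> \<le> 1 / real (n ^ 2) \<and> 1 / real (n ^ 2) \<le> 1" for j :: nat
    using inverse_bounds[OF bounds(5,6)] by simp
  show "ssperk_A n i j = 0" if "i \<le> j" for i j
    using that by (simp add: ssperk_A_eq)
  show "0 < ?\<alpha>"
    using two_le_n by simp
  have "1 \<le> 2 * real n ^ 2"
    using bounds(5) by linarith
  then show "?\<alpha> \<le> 1"
    using two_le_n by (subst divide_le_eq_1_pos) auto
qed

end

theorem mainTheorem2:
  fixes n :: nat
  assumes "n \<ge> 2"
  defines "s \<equiv> n ^ 2"
    and "A \<equiv> ssperk_A n"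
    and "b \<equiv> (\<lambda>i::nat. 1 / real (n ^ 2))"
    and "c \<equiv> rk_c (n ^ 2) (ssperk_A n)"
  shows "(\<Sum>i = 1..s. b i) = 1
    \<and> (\<Sum>i = 1..s. b i * c i) = 1 / 2
    \<and> (\<Sum>i = 1..s. b i * (c i) ^ 2) \<noteq> 1 / 3
    \<and> (\<Sum>i = 1..s. b i * ((c i) ^ 2 / 2 - (\<Sum>j = 1..s. A i j * c j))) \<noteq> 0
    \<and> ssp_coeff s A b > 0"
proof -
  interpret ssperk n
    by (rule ssperk.intro) (rule assms(1))
  have n: "0 < real n ^ 2"
    using assms(1) by simp
  have weighted: "(\<Sum>i = 1..s. b i * f i) = (\<Sum>i = 1..n ^ 2. f i) / real n ^ 2" for f
    unfolding s_def b_def by (simp add: sum_divide_distrib)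
  have "(\<Sum>i = 1..s. b i) = 1"
    using weighted[of "\<lambda>_. 1"] n by simp
  moreover have "(\<Sum>i = 1..s. b i * c i) = 1 / 2"
    unfolding weighted c_def sum_c using n by simp
  moreover have "(\<Sum>i = 1..s. b i * (c i) ^ 2) \<noteq> 1 / 3"
    unfolding weighted c_def using sum_c_squared_ne n by (simp add: field_simps)
  moreover have "(\<Sum>i = 1..s. b i * ((c i) ^ 2 / 2 - (\<Sum>j = 1..s. A i j * c j))) \<noteq> 0"
    unfolding weighted unfolding s_def A_def c_def sum_half_c_squared_minus_Ac using assms(1) by simp
  moreover have "ssp_coeff s A b > 0"
    unfolding s_def A_def b_def by (rule ssp_coeff_pos)
  ultimately show ?thesis
    by blast
qed

end
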